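(* For formulas $S_1,S_2$, the equality $\emptyset[S_1,S_2]=\emptyset[S_2]$ holds if and only if at least one of the following holds: (1) $S_1$ is inconsistent; (2) $S_1$ is tautological; (3) $S_1$ is equivalent to $S_2$; (4) $S_1$ is equivalent to $\neg S_2$.
   Context: Propositional models are truth assignments over a finite set of variables; a formula used where a set of models is expected stands for its set of models. A doxastic state is a sequence $[C(0),\ldots,C(k)]$ of nonempty, pairwise disjoint sets of models covering all models. The flat doxastic state $\emptyset$ is $[\text{all models}]$. Lexicographic revision: $C\,\mathrm{lex}(A) = [C(0)\cap A,\ldots,C(k)\cap A, C(0)\setminus A,\ldots,C(k)\setminus A]$, empty sets discarded. $\emptyset[S_1,\ldots,S_m]$ denotes $\emptyset$ revised lexicographically by $S_1$, then $S_2$, ..., then $S_m$. *)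

theory Defs
  imports Main
begin

datatype 'v form =
    FVar 'v
  | FTrue
  | FFalse
  | FNot "'v form"
  | FAnd "'v form" "'v form"
  | FOr "'v form" "'v form"
  | FImp "'v form" "'v form"

type_synonym 'v model = "'v \<Rightarrow> bool"

fun holds :: "'v model \<Rightarrow> 'v form \<Rightarrow> bool" where
  "holds m (FVar x) = m x"
| "holds m FTrue = True"
| "holds m FFalse = False"
| "holds m (FNot f) = (\<not> holds m f)"
| "holds m (FAnd f g) = (holds m f \<and> holds m g)"
| "holds m (FOr f g) = (holds m f \<or> holds m g)"
| "holds m (FImp f g) = (holds m f \<longrightarrow> holds m g)"

definition mods :: "'v form \<Rightarrow> 'v model set" where
  "mods f = {m. holds m f}"

definition inconsistent :: "'v form \<Rightarrow> bool" where
  "inconsistent f \<longleftrightarrow> mods f = {}"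

definition tautological :: "'v form \<Rightarrow> bool" where
  "tautological f \<longleftrightarrow> mods f = UNIV"

definition equivalent :: "'v form \<Rightarrow> 'v form \<Rightarrow> bool" where
  "equivalent f g \<longleftrightarrow> mods f = mods g"

(* Doxastic states: sequences [C(0),...,C(k)] of sets of models *)
type_synonym 'v doxstate = "'v model set list"

definition flat :: "'v doxstate" where
  "flat = [UNIV]"

definition lex :: "'v doxstate \<Rightarrow> 'v model set \<Rightarrow> 'v doxstate" where
  "lex C A = filter (\<lambda>c. c \<noteq> {}) (map (\<lambda>c. c \<inter> A) C @ map (\<lambda>c. c - A) C)"

definition revs :: "'v form list \<Rightarrow> 'v doxstate" where
  "revs Ss = foldl (\<lambda>C S. lex C (mods S)) flat Ss"

end

(* With A = mods S1 and B = mods S2, the state \<emptyset>[S1,S2] lists the nonempty cells among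
   A \<inter> B, -A \<inter> B, A - B, -A - B, and \<emptyset>[S2] those among B, -B. Each of the four cells lies
   inside B or inside -B, so equality splits into two equations: B must not be cut by A, and
   neither may -B. Hence A \<inter> B or -A \<inter> B is empty, and A - B or -A - B is empty; the four
   combinations are A = {}, A = -B, A = B and A = UNIV. *)

theory Submission
  imports Defs
begin

lemma mods_FNot [simp]: "mods (FNot f) = - mods f"
  by (auto simp: mods_def)

lemma filter_nonempty_map_filter_nonempty:
  assumes "f {} = {}"
  shows "filter (\<lambda>c. c \<noteq> {}) (map f (filter (\<lambda>c. c \<noteq> {}) C)) = filter (\<lambda>c. c \<noteq> {}) (map f C)"
  using assms by (induction C) auto

lemma lex_filter_nonempty: "lex (filter (\<lambda>c. c \<noteq> {}) C) A = lex C A"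
  by (simp add: lex_def filter_nonempty_map_filter_nonempty)

lemma lex_flat: "lex flat A = filter (\<lambda>c. c \<noteq> {}) [A, - A]"
  by (simp add: lex_def flat_def Compl_eq_Diff_UNIV)

lemma lex_lex_flat:
  "lex (lex flat A) B = filter (\<lambda>c. c \<noteq> {}) [A \<inter> B, - A \<inter> B, A - B, - A - B]"
  unfolding lex_flat lex_filter_nonempty by (simp add: lex_def)

lemma filter_nonempty_pair_eq_singleton:
  assumes "filter (\<lambda>c. c \<noteq> {}) [X, Y] = filter (\<lambda>c. c \<noteq> {}) [Z]"
  shows "X = {} \<or> Y = {}"
  using assms by (auto split: if_splits)

lemma lex_lex_flat_eq_lex_flat_iff:
  "lex (lex flat A) B = lex flat B \<longleftrightarrow> A = {} \<or> A = UNIV \<or> A = B \<or> A = - B"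
proof -
  have "lex (lex flat A) B = lex flat B \<longleftrightarrow>
      filter (\<lambda>c. c \<noteq> {}) [A \<inter> B, - A \<inter> B, A - B, - A - B] = filter (\<lambda>c. c \<noteq> {}) [B, - B]"
    by (metis lex_lex_flat lex_flat)
  also have "\<dots> \<longleftrightarrow> A = {} \<or> A = UNIV \<or> A = B \<or> A = - B"
  proof
    assume cells: "filter (\<lambda>c. c \<noteq> {}) [A \<inter> B, - A \<inter> B, A - B, - A - B] =
        filter (\<lambda>c. c \<noteq> {}) [B, - B]"
    have "filter (\<lambda>c. c \<noteq> {}) [A \<inter> B, - A \<inter> B] = filter (\<lambda>c. c \<noteq> {}) [B]"
      using arg_cong[OF cells, of "filter (\<lambda>c. c \<subseteq> B)"] by (auto split: if_splits)
    then have inside: "A \<inter> B = {} \<or> - A \<inter> B = {}"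
      by (rule filter_nonempty_pair_eq_singleton)
    have "filter (\<lambda>c. c \<noteq> {}) [A - B, - A - B] = filter (\<lambda>c. c \<noteq> {}) [- B]"
      using arg_cong[OF cells, of "filter (\<lambda>c. c \<subseteq> - B)"] by (auto split: if_splits)
    then have outside: "A - B = {} \<or> - A - B = {}"
      by (rule filter_nonempty_pair_eq_singleton)
    show "A = {} \<or> A = UNIV \<or> A = B \<or> A = - B"
      using inside outside by blast
  qed (auto simp: Diff_eq)
  finally show ?thesis .
qed

theorem mainTheorem8:
  fixes S1 S2 :: "('v::finite) form"
  shows "revs [S1, S2] = revs [S2] \<longleftrightarrow>
           (inconsistent S1 \<or> tautological S1 \<or> equivalent S1 S2 \<or> equivalent S1 (FNot S2))"
  by (simp add: revs_def lex_lex_flat_eq_lex_flat_iff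
      inconsistent_def tautological_def equivalent_def)

end
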